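(* For any $x\in(H^\ast)^{\otimes n}$ and $v\in H^{\otimes n}$, $[\mathcal{B}_n(x)](v)=x(\mathcal{B}_n(v))$.
   Context: $G$ finite group, $H$ a finite dimensional $G$-graded $G$-module, $H^\ast$ its dual with $(\gamma\cdot x)(v)=x(\gamma^{-1}\cdot v)$ and $(H^\ast)_m=(H_{m^{-1}})^\ast$; $B_n$ acts on $H^{\otimes n}$ and $(H^\ast)^{\otimes n}$ via the braiding $v\otimes w\mapsto(g\cdot w)\otimes v$ for $v$ of degree $g$. The pairing is $(x_1\otimes\cdots\otimes x_n)(v_1\otimes\cdots\otimes v_n)=x_n(v_1)\cdots x_1(v_n)$. $\mathcal{B}_n$ is the $n$th braidization (on $H^{\otimes n}$ and on $(H^\ast)^{\otimes n}$): for $\boldsymbol\gamma\in G^n$ and $v$ in $H_{\gamma_1}\otimes\cdots\otimes H_{\gamma_n}$, $\mathcal{B}_n(v)=\frac{1}{|A_{\boldsymbol\gamma}|}\sum_{b_{\boldsymbol\gamma}\in A_{\boldsymbol\gamma}}b_{\boldsymbol\gamma}\cdot v$, where $A_{\boldsymbol\gamma}$ is the set of distinct transformations $b_{\boldsymbol\gamma}\in G^n\rtimes S_n$ induced by braids $b\in B_n$ acting on $\boldsymbol\gamma$ (under $b_i(\gamma_1,\dots,\gamma_n)=(\dots,\gamma_i\gamma_{i+1}\gamma_i^{-1},\gamma_i,\dots)$), i.e. morphisms with source $\boldsymbol\gamma$ in the groupoid $\mathcal G^n$. *)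

theory Defs
  imports "HOL-Algebra.Group"
begin

text \<open>The finite-dimensional G-graded G-module H over a field 'k is
given by a homogeneous basis indexed by the finite type 'i: basis vector e_i has degree
deg i, and g acts by the matrix rho g, where rho g i j is the coefficient of e_i in g.e_j.
A tensor in the n-th tensor power is a coefficient function on index lists of length n.\<close>

definition graded_module ::
  "('g, 'b) monoid_scheme \<Rightarrow> ('i::finite \<Rightarrow> 'g) \<Rightarrow> ('g \<Rightarrow> 'i \<Rightarrow> 'i \<Rightarrow> 'k::field) \<Rightarrow> bool" where
  "graded_module G deg rho \<longleftrightarrow>
     (\<forall>i. deg i \<in> carrier G) \<and>
     (\<forall>i j. rho \<one>\<^bsub>G\<^esub> i j = (if i = j then 1 else 0)) \<and>
     (\<forall>g\<in>carrier G. \<forall>h\<in>carrier G. \<forall>i j.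
        rho (g \<otimes>\<^bsub>G\<^esub> h) i j = (\<Sum>k\<in>UNIV. rho g i k * rho h k j)) \<and>
     (\<forall>g\<in>carrier G. \<forall>i j. rho g i j \<noteq> 0 \<longrightarrow>
        deg i = g \<otimes>\<^bsub>G\<^esub> deg j \<otimes>\<^bsub>G\<^esub> inv\<^bsub>G\<^esub> g)"

text \<open>Dual module H*: dual basis e^i has degree (deg i)^-1, since (H*)_m = (H_{m^-1})^*,
and (g.x)(v) = x(g^-1.v) gives coefficient of e^j in g.e^i equal to rho (g^-1) i j.\<close>

definition dual_deg :: "('g, 'b) monoid_scheme \<Rightarrow> ('i \<Rightarrow> 'g) \<Rightarrow> 'i \<Rightarrow> 'g" where
  "dual_deg G deg i = inv\<^bsub>G\<^esub> (deg i)"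

definition dual_rep :: "('g, 'b) monoid_scheme \<Rightarrow> ('g \<Rightarrow> 'i \<Rightarrow> 'i \<Rightarrow> 'k) \<Rightarrow> 'g \<Rightarrow> 'i \<Rightarrow> 'i \<Rightarrow> 'k" where
  "dual_rep G rho g j i = rho (inv\<^bsub>G\<^esub> g) i j"

text \<open>Transformations in G^n \<rtimes> S_n: a pair (h, p) of lists of length n acts on a pure
tensor v_0 \<otimes> ... \<otimes> v_{n-1} by producing the tensor whose j-th factor is h!j . v_{p!j}.
A state records also the current degree sequence. Braid generator sigma_i (True) sends
(v_i of degree a) \<otimes> (v_{i+1} of degree b) to (a.v_{i+1}) \<otimes> v_i, with new degrees (a b a^-1, a);
its inverse (False) sends it to v_{i+1} \<otimes> (b^-1.v_i), with new degrees (b, b^-1 a b).\<close>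

definition braid_step ::
  "('g, 'b) monoid_scheme \<Rightarrow> nat \<times> bool \<Rightarrow> 'g list \<times> 'g list \<times> nat list \<Rightarrow> 'g list \<times> 'g list \<times> nat list" where
  "braid_step G s st = (case st of (\<gamma>, h, p) \<Rightarrow> (case s of (i, pos) \<Rightarrow>
     if pos then
       (\<gamma>[i := \<gamma>!i \<otimes>\<^bsub>G\<^esub> \<gamma>!(Suc i) \<otimes>\<^bsub>G\<^esub> inv\<^bsub>G\<^esub> (\<gamma>!i), Suc i := \<gamma>!i],
        h[i := \<gamma>!i \<otimes>\<^bsub>G\<^esub> h!(Suc i), Suc i := h!i],
        p[i := p!(Suc i), Suc i := p!i])
     else
       (\<gamma>[i := \<gamma>!(Suc i), Suc i := inv\<^bsub>G\<^esub> (\<gamma>!(Suc i)) \<otimes>\<^bsub>G\<^esub> \<gamma>!i \<otimes>\<^bsub>G\<^esub> \<gamma>!(Suc i)],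
        h[i := h!(Suc i), Suc i := inv\<^bsub>G\<^esub> (\<gamma>!(Suc i)) \<otimes>\<^bsub>G\<^esub> h!i],
        p[i := p!(Suc i), Suc i := p!i])))"

definition braid_word_apply ::
  "('g, 'b) monoid_scheme \<Rightarrow> (nat \<times> bool) list \<Rightarrow> 'g list \<Rightarrow> 'g list \<times> 'g list \<times> nat list" where
  "braid_word_apply G w \<gamma> = fold (braid_step G) w (\<gamma>, replicate (length \<gamma>) \<one>\<^bsub>G\<^esub>, [0..<length \<gamma>])"

definition braid_transf :: "('g, 'b) monoid_scheme \<Rightarrow> 'g list \<Rightarrow> ('g list \<times> nat list) set" where
  "braid_transf G \<gamma> = {snd (braid_word_apply G w \<gamma>) | w. \<forall>s\<in>set w. Suc (fst s) < length \<gamma>}"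

definition tuples :: "nat \<Rightarrow> 'i list set" where
  "tuples n = {xs. length xs = n}"

definition braidization ::
  "('g, 'b) monoid_scheme \<Rightarrow> ('i::finite \<Rightarrow> 'g) \<Rightarrow> ('g \<Rightarrow> 'i \<Rightarrow> 'i \<Rightarrow> 'k::field) \<Rightarrow> nat
     \<Rightarrow> ('i list \<Rightarrow> 'k) \<Rightarrow> ('i list \<Rightarrow> 'k)" where
  "braidization G deg rho n T = (\<lambda>js. if length js = n then
      (\<Sum>is\<in>tuples n. T is *
         (1 / of_nat (card (braid_transf G (map deg is)))) *
         (\<Sum>(h, p)\<in>braid_transf G (map deg is). \<Prod>j<n. rho (h!j) (js!j) (is!(p!j))))
     else 0)"

text \<open>Pairing (x_1 \<otimes> ... \<otimes> x_n)(v_1 \<otimes> ... \<otimes> v_n) = x_n(v_1) ... x_1(v_n), extended bilinearly;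
dual basis: e^j(e_i) = [i = j].\<close>
definition pairing :: "nat \<Rightarrow> ('i list \<Rightarrow> 'k::field) \<Rightarrow> ('i list \<Rightarrow> 'k) \<Rightarrow> 'k" where
  "pairing n X T = (\<Sum>js\<in>tuples n. \<Sum>is\<in>tuples n. X js * T is *
      (\<Prod>k<n. if js!(n - 1 - k) = is!k then 1 else 0))"

end

theory Submission
  imports Defs
begin

text \<open>
  Expanding the pairing, both sides become double sums over basis tensors of the matrix
  coefficients of \<open>\<B>\<^sub>n\<close>. The coefficient of \<open>e\<^sub>c\<close> in \<open>\<B>\<^sub>n(e\<^sub>b)\<close> is an average over
  the transformations in \<open>A\<^sub>\<gamma>\<close>, \<open>\<gamma> = deg b\<close>, and by the grading only those ending at the degree
  sequence \<open>\<gamma>' = deg c\<close> contribute, i.e. the morphisms \<open>\<gamma> \<rightarrow> \<gamma>'\<close> of the groupoid. Inverting such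
  a morphism and then mirroring it (reversing the tensor factors, which inverts all degrees and
  exchanges \<open>\<sigma>\<^sub>i\<close> with the inverse of \<open>\<sigma>\<^bsub>n-2-i\<^esub>\<close>) is a bijection onto the morphisms between the reversed
  dual degree sequences, and it matches the corresponding products of matrix coefficients,
  because \<open>H\<^sup>*\<close> is acted on by inverses. The normalisations agree as well: \<open>|A\<^sub>\<gamma>|\<close> is
  constant on connected components of the groupoid and invariant under mirroring.
\<close>

section \<open>States of the braid action\<close>

definition braid_state_wf ::
  "('g, 'b) monoid_scheme \<Rightarrow> nat \<Rightarrow> 'g list \<times> 'g list \<times> nat list \<Rightarrow> bool" where
  "braid_state_wf G n s = (case s of (\<gamma>, h, p) \<Rightarrow>
     length \<gamma> = n \<and> length h = n \<and> length p = n \<and> (\<forall>j<n. \<gamma>!j \<in> carrier G) \<and>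
     (\<forall>j<n. h!j \<in> carrier G) \<and> (\<forall>j<n. p!j < n) \<and> distinct p)"

definition initial_state :: "('g, 'b) monoid_scheme \<Rightarrow> 'g list \<Rightarrow> 'g list \<times> 'g list \<times> nat list" where
  "initial_state G \<gamma> = (\<gamma>, replicate (length \<gamma>) \<one>\<^bsub>G\<^esub>, [0..<length \<gamma>])"

definition valid_word :: "nat \<Rightarrow> (nat \<times> bool) list \<Rightarrow> bool" where
  "valid_word n w = (\<forall>s\<in>set w. Suc (fst s) < n)"

definition reachable_states ::
  "('g, 'b) monoid_scheme \<Rightarrow> 'g list \<Rightarrow> ('g list \<times> 'g list \<times> nat list) set" where
  "reachable_states G \<gamma> =
     {fold (braid_step G) w (initial_state G \<gamma>) | w. valid_word (length \<gamma>) w}"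

definition state_morphisms ::
  "('g, 'b) monoid_scheme \<Rightarrow> 'g list \<Rightarrow> 'g list \<Rightarrow> ('g list \<times> 'g list \<times> nat list) set" where
  "state_morphisms G \<gamma> \<gamma>' = {s \<in> reachable_states G \<gamma>. fst s = \<gamma>'}"

definition inverse_word :: "(nat \<times> bool) list \<Rightarrow> (nat \<times> bool) list" where
  "inverse_word w = rev (map (\<lambda>(i, b). (i, \<not> b)) w)"

definition mirror_letter :: "nat \<Rightarrow> nat \<times> bool \<Rightarrow> nat \<times> bool" where
  "mirror_letter n = (\<lambda>(i, b). (n - 2 - i, \<not> b))"

text \<open>The product \<open>(h', p') \<cdot> (h, p)\<close> in \<open>G\<^sup>n \<rtimes> S\<^sub>n\<close>, i.e. the state reached by the word of \<open>s\<close>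
  when started from \<open>(h, p)\<close> instead of the identity.\<close>

definition compose_state ::
  "('g, 'b) monoid_scheme \<Rightarrow> nat \<Rightarrow> 'g list \<times> 'g list \<times> nat list \<Rightarrow> 'g list \<times> nat list
     \<Rightarrow> 'g list \<times> 'g list \<times> nat list" where
  "compose_state G n s f = (case s of (\<gamma>, h', p') \<Rightarrow> case f of (h, p) \<Rightarrow>
     (\<gamma>, map (\<lambda>j. h'!j \<otimes>\<^bsub>G\<^esub> h!(p'!j)) [0..<n], map (\<lambda>j. p!(p'!j)) [0..<n]))"

definition mirror_state ::
  "('g, 'b) monoid_scheme \<Rightarrow> nat \<Rightarrow> 'g list \<times> 'g list \<times> nat list \<Rightarrow> 'g list \<times> 'g list \<times> nat list" where
  "mirror_state G n s = (case s of (\<gamma>, h, p) \<Rightarrow>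
     (rev (map (\<lambda>a. inv\<^bsub>G\<^esub> a) \<gamma>), rev h, rev (map (\<lambda>k. n - 1 - k) p)))"

definition transports_degrees ::
  "('g, 'b) monoid_scheme \<Rightarrow> 'g list \<Rightarrow> 'g list \<times> 'g list \<times> nat list \<Rightarrow> bool" where
  "transports_degrees G \<gamma> s = (case s of (\<gamma>', h, p) \<Rightarrow>
     \<forall>j<length \<gamma>. \<gamma>'!j = h!j \<otimes>\<^bsub>G\<^esub> \<gamma>!(p!j) \<otimes>\<^bsub>G\<^esub> inv\<^bsub>G\<^esub> (h!j))"

abbreviation inv_rev :: "('g, 'b) monoid_scheme \<Rightarrow> 'g list \<Rightarrow> 'g list" where
  "inv_rev G \<gamma> \<equiv> rev (map (\<lambda>a. inv\<^bsub>G\<^esub> a) \<gamma>)"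

lemma braid_transf_eq_reachable_states: "braid_transf G \<gamma> = snd ` reachable_states G \<gamma>"
  unfolding braid_transf_def reachable_states_def valid_word_def braid_word_apply_def
    initial_state_def
  by auto

lemma valid_word_append [simp]: "valid_word n (v @ w) \<longleftrightarrow> valid_word n v \<and> valid_word n w"
  by (auto simp: valid_word_def)

lemma valid_word_inverse_word [simp]: "valid_word n (inverse_word w) = valid_word n w"
  by (auto simp: valid_word_def inverse_word_def)

lemma inverse_word_inverse_word [simp]: "inverse_word (inverse_word w) = w"
  by (induction w) (auto simp: inverse_word_def)

lemma valid_word_map_mirror_letter: "valid_word n w \<Longrightarrow> valid_word n (map (mirror_letter n) w)"
  by (auto simp: valid_word_def mirror_letter_def)

lemma fold_braid_step_invariant:
  assumes step: "\<And>i b s. P s \<Longrightarrow> Suc i < n \<Longrightarrow> P (braid_step G (i, b) s)"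
    and "P s" and "valid_word n w"
  shows "P (fold (braid_step G) w s)"
  using assms(2,3)
proof (induction w arbitrary: s)
  case (Cons a w)
  obtain i b where a: "a = (i, b)" by (cases a)
  with Cons.prems have "Suc i < n" "valid_word n w" by (auto simp: valid_word_def)
  with Cons.IH[OF step[OF Cons.prems(1)]] a show ?case by simp
qed simp

context group
begin

lemma inv_mult_cancel_left [simp]: "x \<in> carrier G \<Longrightarrow> y \<in> carrier G \<Longrightarrow> inv x \<otimes> (x \<otimes> y) = y"
  by (simp add: m_assoc [symmetric])

lemma mult_inv_cancel_left [simp]: "x \<in> carrier G \<Longrightarrow> y \<in> carrier G \<Longrightarrow> x \<otimes> (inv x \<otimes> y) = y"
  by (simp add: m_assoc [symmetric])

lemma braid_state_wf_braid_step:
  "braid_state_wf G n s \<Longrightarrow> Suc i < n \<Longrightarrow> braid_state_wf G n (braid_step G (i, b) s)"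
  unfolding braid_state_wf_def braid_step_def by (cases s) (auto simp: nth_list_update)

lemma braid_state_wf_fold:
  "braid_state_wf G n s \<Longrightarrow> valid_word n w \<Longrightarrow> braid_state_wf G n (fold (braid_step G) w s)"
  by (rule fold_braid_step_invariant) (auto intro: braid_state_wf_braid_step)

lemma fold_braid_step_commute:
  assumes comm: "\<And>i b s. braid_state_wf G n s \<Longrightarrow> Suc i < n \<Longrightarrow>
      f (braid_step G (i, b) s) = braid_step G (g (i, b)) (f s)"
    and "braid_state_wf G n s" and "valid_word n w"
  shows "fold (braid_step G) (map g w) (f s) = f (fold (braid_step G) w s)"
  using assms(2,3)
proof (induction w arbitrary: s)
  case (Cons a w)
  obtain i b where a: "a = (i, b)" by (cases a)
  with Cons.prems have i: "Suc i < n" and w: "valid_word n w" by (auto simp: valid_word_def)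
  from Cons.IH[OF braid_state_wf_braid_step[OF Cons.prems(1) i] w] a
  show ?case by (simp add: comm[OF Cons.prems(1) i])
qed simp

lemma braid_step_compose_state:
  assumes "braid_state_wf G n s" "Suc i < n" "length h = n" "\<forall>j<n. h!j \<in> carrier G"
  shows "braid_step G (i, b) (compose_state G n s (h, p)) = compose_state G n (braid_step G (i, b) s) (h, p)"
  using assms unfolding braid_state_wf_def braid_step_def compose_state_def
  by (cases s) (auto intro!: nth_equalityI simp: nth_list_update m_assoc)

lemma fold_compose_state:
  assumes "braid_state_wf G n s" "valid_word n w" "length h = n" "\<forall>j<n. h!j \<in> carrier G"
  shows "fold (braid_step G) w (compose_state G n s (h, p)) = compose_state G n (fold (braid_step G) w s) (h, p)"
proof -
  have "fold (braid_step G) (map id w) (compose_state G n s (h, p))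
      = compose_state G n (fold (braid_step G) w s) (h, p)"
    by (rule fold_braid_step_commute[OF _ assms(1,2)]) (simp add: braid_step_compose_state assms(3,4))
  then show ?thesis by simp
qed

lemma braid_step_inverse:
  "braid_state_wf G n s \<Longrightarrow> Suc i < n \<Longrightarrow> braid_step G (i, \<not> b) (braid_step G (i, b) s) = s"
  unfolding braid_state_wf_def braid_step_def
  by (cases s) (auto intro!: nth_equalityI simp: nth_list_update m_assoc inv_mult_group)

lemma fold_inverse_word:
  assumes "braid_state_wf G n s" "valid_word n w"
  shows "fold (braid_step G) (inverse_word w) (fold (braid_step G) w s) = s"
  using assms
proof (induction w arbitrary: s)
  case (Cons a w)
  obtain i b where a: "a = (i, b)" by (cases a)
  with Cons.prems have i: "Suc i < n" by (auto simp: valid_word_def)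
  with Cons have "fold (braid_step G) (inverse_word w) (fold (braid_step G) w (braid_step G (i, b) s))
      = braid_step G (i, b) s"
    by (auto simp: valid_word_def braid_state_wf_braid_step)
  with a braid_step_inverse[OF Cons.prems(1) i] show ?case by (simp add: inverse_word_def)
qed (simp add: inverse_word_def)

lemma braid_step_mirror_state:
  assumes "braid_state_wf G n s" "Suc i < n"
  shows "braid_step G (mirror_letter n (i, b)) (mirror_state G n s) = mirror_state G n (braid_step G (i, b) s)"
proof -
  obtain \<gamma> h p where s: "s = (\<gamma>, h, p)" by (cases s)
  have "Suc (n - 2 - i) = n - 1 - i" "n - 2 - i < n" "n - Suc (n - 2 - i) = Suc i"
    "n - Suc (n - Suc (Suc i)) = Suc i" "n - Suc (n - Suc i) = i"
    using assms(2) by auto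
  with assms show ?thesis
    unfolding braid_state_wf_def braid_step_def mirror_state_def mirror_letter_def s
    by (auto intro!: nth_equalityI simp: nth_list_update rev_nth m_assoc inv_mult_group)
qed

lemma fold_mirror_state:
  "braid_state_wf G n s \<Longrightarrow> valid_word n w \<Longrightarrow>
   fold (braid_step G) (map (mirror_letter n) w) (mirror_state G n s) = mirror_state G n (fold (braid_step G) w s)"
  by (rule fold_braid_step_commute) (auto simp: braid_step_mirror_state)

lemma braid_step_transports_degrees:
  assumes wf: "braid_state_wf G n s" and n: "length \<gamma> = n" and \<gamma>: "\<forall>j<n. \<gamma>!j \<in> carrier G"
    and tr: "transports_degrees G \<gamma> s" and i: "Suc i < n"
  shows "transports_degrees G \<gamma> (braid_step G (i, b) s)"
proof -
  obtain \<gamma>' h p where s: "s = (\<gamma>', h, p)" by (cases s)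
  have len: "length \<gamma>' = n" "length h = n" "length p = n"
    and carr: "\<forall>j<n. \<gamma>'!j \<in> carrier G" "\<forall>j<n. h!j \<in> carrier G" "\<forall>j<n. p!j < n"
    using wf unfolding s braid_state_wf_def by auto
  have \<gamma>': "\<And>j. j < n \<Longrightarrow> \<gamma>'!j = h!j \<otimes> \<gamma>!(p!j) \<otimes> inv (h!j)"
    using tr n unfolding s transports_degrees_def by auto
  have c: "\<gamma>'!i \<in> carrier G" "\<gamma>'!Suc i \<in> carrier G" "h!i \<in> carrier G" "h!Suc i \<in> carrier G"
    "\<gamma>!(p!i) \<in> carrier G" "\<gamma>!(p!Suc i) \<in> carrier G"
    using carr \<gamma> i by auto
  have "\<gamma>'!i \<otimes> \<gamma>'!Suc i \<otimes> inv (\<gamma>'!i)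
      = (\<gamma>'!i \<otimes> h!Suc i) \<otimes> \<gamma>!(p!Suc i) \<otimes> inv (\<gamma>'!i \<otimes> h!Suc i)"
    using c \<gamma>'[of "Suc i"] i by (simp add: m_assoc inv_mult_group)
  moreover have "inv (\<gamma>'!Suc i) \<otimes> \<gamma>'!i \<otimes> \<gamma>'!Suc i
      = (inv (\<gamma>'!Suc i) \<otimes> h!i) \<otimes> \<gamma>!(p!i) \<otimes> inv (inv (\<gamma>'!Suc i) \<otimes> h!i)"
    using c \<gamma>'[of i] i by (simp add: m_assoc inv_mult_group)
  ultimately show ?thesis
    unfolding s braid_step_def transports_degrees_def using len \<gamma>' i
    by (auto simp: nth_list_update n)
qed

abbreviation in_carrier :: "'a list \<Rightarrow> bool" where
  "in_carrier \<gamma> \<equiv> \<forall>j<length \<gamma>. \<gamma>!j \<in> carrier G"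

lemma reachable_statesD:
  assumes "s \<in> reachable_states G \<gamma>" "in_carrier \<gamma>"
  shows "braid_state_wf G (length \<gamma>) s" and "transports_degrees G \<gamma> s"
proof -
  obtain w where w: "valid_word (length \<gamma>) w" "s = fold (braid_step G) w (initial_state G \<gamma>)"
    using assms(1) unfolding reachable_states_def by auto
  have init: "braid_state_wf G (length \<gamma>) (initial_state G \<gamma>) \<and>
      transports_degrees G \<gamma> (initial_state G \<gamma>)"
    using assms(2) unfolding braid_state_wf_def transports_degrees_def initial_state_def by auto
  have "braid_state_wf G (length \<gamma>) s \<and> transports_degrees G \<gamma> s"
    unfolding w(2)
    by (rule fold_braid_step_invariant[where
          P = "\<lambda>s. braid_state_wf G (length \<gamma>) s \<and> transports_degrees G \<gamma> s", OF _ init w(1)])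
      (use braid_state_wf_braid_step braid_step_transports_degrees assms(2) in blast)
  then show "braid_state_wf G (length \<gamma>) s" "transports_degrees G \<gamma> s" by auto
qed

end

lemma fold_reachable_states:
  assumes "t \<in> reachable_states G \<gamma>" "valid_word (length \<gamma>) v"
  shows "fold (braid_step G) v t \<in> reachable_states G \<gamma>"
proof -
  obtain w where "valid_word (length \<gamma>) w" "t = fold (braid_step G) w (initial_state G \<gamma>)"
    using assms(1) unfolding reachable_states_def by auto
  with assms(2) show ?thesis
    unfolding reachable_states_def by (auto intro!: exI[of _ "w @ v"])
qed

lemma fst_compose_state [simp]: "fst (compose_state G n s f) = fst s"
  unfolding compose_state_def by (auto split: prod.splits)

lemma fst_mirror_state [simp]: "fst (mirror_state G n s) = inv_rev G (fst s)"
  unfolding mirror_state_def by (auto split: prod.splits)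

context group
begin

lemma reachable_states_fst:
  "s \<in> reachable_states G \<gamma> \<Longrightarrow> in_carrier \<gamma> \<Longrightarrow> length (fst s) = length \<gamma> \<and> in_carrier (fst s)"
  using reachable_statesD[of s \<gamma>] unfolding braid_state_wf_def by (auto split: prod.splits)

lemma inj_on_snd_reachable_states: "in_carrier \<gamma> \<Longrightarrow> inj_on snd (reachable_states G \<gamma>)"
proof (rule inj_onI)
  fix s t assume "s \<in> reachable_states G \<gamma>" "t \<in> reachable_states G \<gamma>" "in_carrier \<gamma>" "snd s = snd t"
  with reachable_statesD show "s = t"
    unfolding braid_state_wf_def transports_degrees_def
    by (cases s; cases t) (auto intro!: nth_equalityI)
qed

lemma finite_reachable_states:
  assumes "finite (carrier G)" "in_carrier \<gamma>"
  shows "finite (reachable_states G \<gamma>)"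
proof -
  let ?n = "length \<gamma>"
  let ?A = "{xs. set xs \<subseteq> carrier G \<and> length xs = ?n}"
  let ?B = "{xs. set xs \<subseteq> {..<?n} \<and> length xs = ?n}"
  have "reachable_states G \<gamma> \<subseteq> ?A \<times> ?A \<times> ?B"
  proof
    fix s assume "s \<in> reachable_states G \<gamma>"
    then have wf: "braid_state_wf G ?n s" using reachable_statesD assms(2) by auto
    obtain a b c where s: "s = (a, b, c)" by (cases s)
    have "set a \<subseteq> carrier G" "set b \<subseteq> carrier G" "set c \<subseteq> {..<?n}"
      using wf unfolding s braid_state_wf_def by (auto simp: in_set_conv_nth)
    with wf show "s \<in> ?A \<times> ?A \<times> ?B" unfolding s braid_state_wf_def by simp
  qed
  moreover have "finite (?A \<times> ?A \<times> ?B)"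
    by (intro finite_cartesian_product finite_lists_length_eq assms(1) finite_lessThan)
  ultimately show ?thesis by (rule finite_subset)
qed

lemma compose_initial_state:
  "length \<gamma> = n \<Longrightarrow> length h = n \<Longrightarrow> length p = n \<Longrightarrow> \<forall>j<n. h!j \<in> carrier G \<Longrightarrow>
   compose_state G n (initial_state G \<gamma>) (h, p) = (\<gamma>, h, p)"
  unfolding compose_state_def initial_state_def by (auto intro!: nth_equalityI)

lemma compose_state_cancel:
  assumes wf: "braid_state_wf G n t" "braid_state_wf G n t'"
    and p: "length p = n" "distinct p" and h: "\<forall>j<n. h!j \<in> carrier G"
    and eq: "compose_state G n t (h, p) = compose_state G n t' (h, p)"
  shows "t = t'"
proof -
  obtain \<gamma> h2 p2 where t: "t = (\<gamma>, h2, p2)" by (cases t)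
  obtain \<gamma>' h2' p2' where t': "t' = (\<gamma>', h2', p2')" by (cases t')
  have "\<gamma> = \<gamma>'" using arg_cong[OF eq, of fst] t t' by simp
  have comp: "\<forall>j<n. h2!j \<otimes> h!(p2!j) = h2'!j \<otimes> h!(p2'!j) \<and> p!(p2!j) = p!(p2'!j)"
    using eq unfolding t t' compose_state_def by auto
  have p2: "\<forall>j<n. p2!j = p2'!j"
    using comp wf p unfolding t t' braid_state_wf_def by (auto simp: nth_eq_iff_index_eq)
  moreover have "\<forall>j<n. h2!j = h2'!j"
  proof (intro allI impI)
    fix j assume j: "j < n"
    with wf p2 have "p2!j < n" "p2'!j = p2!j" unfolding t braid_state_wf_def by auto
    with comp j wf h show "h2!j = h2'!j" unfolding t t' braid_state_wf_def by auto
  qed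
  ultimately show ?thesis
    using wf \<open>\<gamma> = \<gamma>'\<close> unfolding t t' braid_state_wf_def by (auto intro!: nth_equalityI)
qed

text \<open>Every transformation in \<open>A\<^sub>\<gamma>\<close> has an inverse: undo the braid word.\<close>

lemma reachable_states_inverse_ex:
  assumes s: "s \<in> reachable_states G \<gamma>" and \<gamma>: "in_carrier \<gamma>"
  shows "\<exists>t\<in>reachable_states G (fst s). compose_state G (length \<gamma>) t (snd s) = initial_state G \<gamma> \<and>
           compose_state G (length \<gamma>) s (snd t) = initial_state G (fst s)"
proof -
  let ?n = "length \<gamma>"
  obtain w where w: "valid_word ?n w" "s = fold (braid_step G) w (initial_state G \<gamma>)"
    using s unfolding reachable_states_def by auto
  obtain \<gamma>' h p where sp: "s = (\<gamma>', h, p)" by (cases s)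
  have wf_s: "braid_state_wf G ?n s" using reachable_statesD s \<gamma> by auto
  then have len: "length \<gamma>' = ?n" "length h = ?n" "length p = ?n" "\<forall>j<?n. h!j \<in> carrier G"
    and \<gamma>': "in_carrier \<gamma>'"
    unfolding sp braid_state_wf_def by auto
  have wf_init: "braid_state_wf G ?n (initial_state G \<gamma>)" "braid_state_wf G ?n (initial_state G \<gamma>')"
    using \<gamma> \<gamma>' len unfolding braid_state_wf_def initial_state_def by auto
  define t where "t = fold (braid_step G) (inverse_word w) (initial_state G \<gamma>')"
  have t_reach: "t \<in> reachable_states G \<gamma>'"
    unfolding t_def reachable_states_def using w len by auto
  have wf_t: "braid_state_wf G ?n t"
    unfolding t_def using braid_state_wf_fold[OF wf_init(2)] w by auto
  have t_s: "compose_state G ?n t (h, p) = initial_state G \<gamma>"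
  proof -
    have "compose_state G ?n t (h, p)
        = fold (braid_step G) (inverse_word w) (compose_state G ?n (initial_state G \<gamma>') (h, p))"
      unfolding t_def using fold_compose_state[OF wf_init(2), of "inverse_word w" h p] w len by auto
    also have "\<dots> = fold (braid_step G) (inverse_word w) s" using compose_initial_state len sp by auto
    also have "\<dots> = initial_state G \<gamma>" using fold_inverse_word[OF wf_init(1) w(1)] w(2) by simp
    finally show ?thesis .
  qed
  obtain \<gamma>t ht pt where tp: "t = (\<gamma>t, ht, pt)" by (cases t)
  have "\<gamma>t = \<gamma>" using arg_cong[OF t_s, of fst] tp by (simp add: initial_state_def)
  have len_t: "length ht = ?n" "length pt = ?n" "\<forall>j<?n. ht!j \<in> carrier G"
    using wf_t unfolding tp braid_state_wf_def by auto
  have s_t: "compose_state G ?n s (ht, pt) = initial_state G \<gamma>'"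
  proof -
    have "compose_state G ?n s (ht, pt)
        = fold (braid_step G) w (compose_state G ?n (initial_state G \<gamma>) (ht, pt))"
      using w fold_compose_state[OF wf_init(1) w(1) len_t(1,3)] by auto
    also have "\<dots> = fold (braid_step G) w t"
      using compose_initial_state[of \<gamma> ?n ht pt] len_t tp \<open>\<gamma>t = \<gamma>\<close> by auto
    also have "\<dots> = initial_state G \<gamma>'"
      unfolding t_def using fold_inverse_word[OF wf_init(2), of "inverse_word w"] w by simp
    finally show ?thesis .
  qed
  show ?thesis using t_reach t_s s_t sp tp by auto
qed

lemma compose_state_reachable:
  assumes s: "s \<in> reachable_states G \<gamma>" and \<gamma>: "in_carrier \<gamma>"
    and t: "t \<in> reachable_states G (fst s)"
  shows "compose_state G (length \<gamma>) t (snd s) \<in> reachable_states G \<gamma>"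
proof -
  let ?n = "length \<gamma>"
  obtain \<gamma>' h p where sp: "s = (\<gamma>', h, p)" by (cases s)
  have wf_s: "braid_state_wf G ?n s" using reachable_statesD s \<gamma> by auto
  then have len: "length \<gamma>' = ?n" "length h = ?n" "length p = ?n" "\<forall>j<?n. h!j \<in> carrier G"
    and \<gamma>': "in_carrier \<gamma>'"
    unfolding sp braid_state_wf_def by auto
  obtain v where v: "valid_word ?n v" "t = fold (braid_step G) v (initial_state G \<gamma>')"
    using t len unfolding sp reachable_states_def by auto
  have wf_init: "braid_state_wf G ?n (initial_state G \<gamma>')"
    using \<gamma>' len unfolding braid_state_wf_def initial_state_def by auto
  have "compose_state G ?n t (snd s)
      = fold (braid_step G) v (compose_state G ?n (initial_state G \<gamma>') (h, p))"
    using fold_compose_state[OF wf_init v(1) len(2,4), of p] v sp by simp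
  also have "\<dots> = fold (braid_step G) v s" using compose_initial_state[OF len] sp by simp
  finally show ?thesis using fold_reachable_states[OF s v(1)] by simp
qed

lemma inj_on_compose_state:
  assumes s: "s \<in> reachable_states G \<gamma>" and \<gamma>: "in_carrier \<gamma>"
  shows "inj_on (\<lambda>t. compose_state G (length \<gamma>) t (snd s)) (reachable_states G (fst s))"
proof (rule inj_onI)
  let ?n = "length \<gamma>"
  fix t t' assume t: "t \<in> reachable_states G (fst s)" "t' \<in> reachable_states G (fst s)"
    and eq: "compose_state G ?n t (snd s) = compose_state G ?n t' (snd s)"
  have \<gamma>': "in_carrier (fst s)" "length (fst s) = ?n" using reachable_states_fst[OF s \<gamma>] by auto
  obtain h p where hp: "snd s = (h, p)" by (cases "snd s")
  have p: "length p = ?n" "distinct p" and h: "\<forall>j<?n. h!j \<in> carrier G"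
    using reachable_statesD[OF s \<gamma>] hp unfolding braid_state_wf_def by (cases s; auto)+
  have wf: "braid_state_wf G ?n t" "braid_state_wf G ?n t'"
    using reachable_statesD[OF t(1) \<gamma>'(1)] reachable_statesD[OF t(2) \<gamma>'(1)] \<gamma>' by auto
  show "t = t'" by (rule compose_state_cancel[OF wf p h eq[unfolded hp]])
qed

lemma card_reachable_states_fst_le:
  assumes fin: "finite (carrier G)" and s: "s \<in> reachable_states G \<gamma>" and \<gamma>: "in_carrier \<gamma>"
  shows "card (reachable_states G (fst s)) \<le> card (reachable_states G \<gamma>)"
  using inj_on_compose_state[OF s \<gamma>] compose_state_reachable[OF s \<gamma>]
    finite_reachable_states[OF fin \<gamma>]
  by (intro card_inj_on_le) auto

lemma card_reachable_states_fst:
  assumes fin: "finite (carrier G)" and s: "s \<in> reachable_states G \<gamma>" and \<gamma>: "in_carrier \<gamma>"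
  shows "card (reachable_states G (fst s)) = card (reachable_states G \<gamma>)"
proof -
  obtain t where t: "t \<in> reachable_states G (fst s)"
    "compose_state G (length \<gamma>) t (snd s) = initial_state G \<gamma>"
    using reachable_states_inverse_ex[OF s \<gamma>] by auto
  have "fst t = \<gamma>" using arg_cong[OF t(2), of fst] by (simp add: initial_state_def)
  with card_reachable_states_fst_le[OF fin s \<gamma>]
    card_reachable_states_fst_le[OF fin t(1) conjunct2[OF reachable_states_fst[OF s \<gamma>]]]
  show ?thesis by simp
qed

end

section \<open>Inverse and mirrored transformations\<close>

definition inverse_state ::
  "('g, 'b) monoid_scheme \<Rightarrow> 'g list \<Rightarrow> 'g list \<times> 'g list \<times> nat list \<Rightarrow> 'g list \<times> 'g list \<times> nat list" where
  "inverse_state G \<gamma> s = (SOME t. t \<in> reachable_states G (fst s) \<and>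
     compose_state G (length \<gamma>) t (snd s) = initial_state G \<gamma>)"

context group
begin

lemma inverse_state:
  assumes s: "s \<in> reachable_states G \<gamma>" and \<gamma>: "in_carrier \<gamma>"
  shows "inverse_state G \<gamma> s \<in> reachable_states G (fst s)"
    and "compose_state G (length \<gamma>) (inverse_state G \<gamma> s) (snd s) = initial_state G \<gamma>"
    and "compose_state G (length \<gamma>) s (snd (inverse_state G \<gamma> s)) = initial_state G (fst s)"
proof -
  obtain t where t: "t \<in> reachable_states G (fst s)"
    "compose_state G (length \<gamma>) t (snd s) = initial_state G \<gamma>"
    "compose_state G (length \<gamma>) s (snd t) = initial_state G (fst s)"
    using reachable_states_inverse_ex[OF s \<gamma>] by auto
  have some: "inverse_state G \<gamma> s \<in> reachable_states G (fst s) \<and>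
      compose_state G (length \<gamma>) (inverse_state G \<gamma> s) (snd s) = initial_state G \<gamma>"
    unfolding inverse_state_def by (rule someI[of _ t]) (use t in auto)
  then have "inverse_state G \<gamma> s = t"
    using inj_onD[OF inj_on_compose_state[OF s \<gamma>], of "inverse_state G \<gamma> s" t] t by simp
  with some t show "inverse_state G \<gamma> s \<in> reachable_states G (fst s)"
    "compose_state G (length \<gamma>) (inverse_state G \<gamma> s) (snd s) = initial_state G \<gamma>"
    "compose_state G (length \<gamma>) s (snd (inverse_state G \<gamma> s)) = initial_state G (fst s)"
    by auto
qed

lemma fst_inverse_state:
  assumes "s \<in> reachable_states G \<gamma>" "in_carrier \<gamma>"
  shows "fst (inverse_state G \<gamma> s) = \<gamma>"
  using arg_cong[OF inverse_state(2)[OF assms], of fst] by (simp add: initial_state_def)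

lemma inverse_state_inverse_state:
  assumes s: "s \<in> reachable_states G \<gamma>" and \<gamma>: "in_carrier \<gamma>"
  shows "inverse_state G (fst s) (inverse_state G \<gamma> s) = s"
proof -
  let ?t = "inverse_state G \<gamma> s"
  have t: "?t \<in> reachable_states G (fst s)" "fst ?t = \<gamma>"
    using inverse_state(1)[OF s \<gamma>] fst_inverse_state[OF s \<gamma>] by auto
  have \<gamma>': "in_carrier (fst s)" "length (fst s) = length \<gamma>" using reachable_states_fst[OF s \<gamma>] by auto
  have "compose_state G (length \<gamma>) (inverse_state G (fst s) ?t) (snd ?t)
      = compose_state G (length \<gamma>) s (snd ?t)"
    using inverse_state(2)[OF t(1) \<gamma>'(1)] inverse_state(3)[OF s \<gamma>] \<gamma>'(2) by simp
  moreover have "inverse_state G (fst s) ?t \<in> reachable_states G (fst ?t)"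
    using inverse_state(1)[OF t(1) \<gamma>'(1)] .
  ultimately show ?thesis
    using inj_onD[OF inj_on_compose_state[OF t(1) \<gamma>'(1)]] s t \<gamma>'(2) by simp
qed

lemma mirror_initial_state:
  "mirror_state G (length \<gamma>) (initial_state G \<gamma>) = initial_state G (inv_rev G \<gamma>)"
  unfolding mirror_state_def initial_state_def by (auto intro!: nth_equalityI simp: rev_nth)

lemma mirror_mirror_state: "braid_state_wf G n s \<Longrightarrow> mirror_state G n (mirror_state G n s) = s"
  unfolding mirror_state_def braid_state_wf_def
  by (cases s) (auto intro!: nth_equalityI simp: rev_nth rev_map [symmetric])

lemma inv_rev_inv_rev: "in_carrier \<gamma> \<Longrightarrow> inv_rev G (inv_rev G \<gamma>) = \<gamma>"
  by (auto intro!: nth_equalityI simp: rev_nth rev_map [symmetric])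

lemma in_carrier_inv_rev: "in_carrier \<gamma> \<Longrightarrow> in_carrier (inv_rev G \<gamma>)"
  by (auto simp: rev_nth)

lemma mirror_state_reachable:
  assumes \<gamma>: "in_carrier \<gamma>" and s: "s \<in> reachable_states G \<gamma>"
  shows "mirror_state G (length \<gamma>) s \<in> reachable_states G (inv_rev G \<gamma>)"
proof -
  obtain w where w: "valid_word (length \<gamma>) w" "s = fold (braid_step G) w (initial_state G \<gamma>)"
    using s unfolding reachable_states_def by auto
  have "braid_state_wf G (length \<gamma>) (initial_state G \<gamma>)"
    using \<gamma> unfolding braid_state_wf_def initial_state_def by auto
  from fold_mirror_state[OF this w(1)] w(2) have "mirror_state G (length \<gamma>) s
      = fold (braid_step G) (map (mirror_letter (length \<gamma>)) w) (initial_state G (inv_rev G \<gamma>))"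
    by (simp add: mirror_initial_state)
  with valid_word_map_mirror_letter[OF w(1)] show ?thesis
    unfolding reachable_states_def by auto
qed

lemma card_reachable_states_inv_rev:
  assumes \<gamma>: "in_carrier \<gamma>"
  shows "card (reachable_states G (inv_rev G \<gamma>)) = card (reachable_states G \<gamma>)"
proof -
  let ?m = "mirror_state G (length \<gamma>)"
  have "bij_betw ?m (reachable_states G \<gamma>) (reachable_states G (inv_rev G \<gamma>))"
  proof (rule bij_betw_byWitness[where f' = ?m])
    show "\<forall>s\<in>reachable_states G \<gamma>. ?m (?m s) = s"
      using mirror_mirror_state reachable_statesD(1)[OF _ \<gamma>] by simp
    show "\<forall>s\<in>reachable_states G (inv_rev G \<gamma>). ?m (?m s) = s"
      using mirror_mirror_state reachable_statesD(1)[OF _ in_carrier_inv_rev[OF \<gamma>]] by simp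
    show "?m ` reachable_states G \<gamma> \<subseteq> reachable_states G (inv_rev G \<gamma>)"
      using mirror_state_reachable[OF \<gamma>] by auto
    show "?m ` reachable_states G (inv_rev G \<gamma>) \<subseteq> reachable_states G \<gamma>"
      using mirror_state_reachable[OF in_carrier_inv_rev[OF \<gamma>]] inv_rev_inv_rev[OF \<gamma>] by auto
  qed
  then show ?thesis by (simp add: bij_betw_same_card)
qed

lemma inverse_state_morphisms:
  assumes "s \<in> state_morphisms G \<gamma> \<gamma>'" "in_carrier \<gamma>"
  shows "inverse_state G \<gamma> s \<in> state_morphisms G \<gamma>' \<gamma>"
proof -
  have s: "s \<in> reachable_states G \<gamma>" "fst s = \<gamma>'"
    using assms(1) unfolding state_morphisms_def by auto
  show ?thesis
    using inverse_state(1)[OF s(1) assms(2)] fst_inverse_state[OF s(1) assms(2)] s(2)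
    unfolding state_morphisms_def by simp
qed

lemma mirror_state_morphisms:
  assumes "s \<in> state_morphisms G \<gamma> \<gamma>'" "in_carrier \<gamma>"
  shows "mirror_state G (length \<gamma>) s \<in> state_morphisms G (inv_rev G \<gamma>) (inv_rev G \<gamma>')"
  using assms mirror_state_reachable unfolding state_morphisms_def by auto

text \<open>The bijection \<open>Hom(\<gamma>, \<gamma>') \<cong> Hom(\<gamma>'\<^sup>*, \<gamma>\<^sup>*)\<close> of the groupoid, where \<open>\<gamma>\<^sup>*\<close> is the reversed
  sequence of inverses, i.e. the degree sequence of the reversed dual tensor.\<close>

lemma bij_betw_mirror_inverse_state:
  assumes \<gamma>: "in_carrier \<gamma>" and \<gamma>': "in_carrier \<gamma>'" and len: "length \<gamma>' = length \<gamma>"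
  shows "bij_betw (\<lambda>s. mirror_state G (length \<gamma>) (inverse_state G \<gamma> s))
    (state_morphisms G \<gamma> \<gamma>') (state_morphisms G (inv_rev G \<gamma>') (inv_rev G \<gamma>))"
proof -
  let ?n = "length \<gamma>"
  let ?f = "\<lambda>s. mirror_state G ?n (inverse_state G \<gamma> s)"
  let ?g = "\<lambda>s. inverse_state G \<gamma>' (mirror_state G ?n s)"
  have \<gamma>'': "in_carrier (inv_rev G \<gamma>')" "length (inv_rev G \<gamma>') = ?n"
    using in_carrier_inv_rev[OF \<gamma>'] len by auto
  have f: "?f s \<in> state_morphisms G (inv_rev G \<gamma>') (inv_rev G \<gamma>)" if "s \<in> state_morphisms G \<gamma> \<gamma>'" for s
    using mirror_state_morphisms[OF inverse_state_morphisms[OF that \<gamma>] \<gamma>'] len by simp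
  have m: "mirror_state G ?n s \<in> state_morphisms G \<gamma>' \<gamma>"
    if "s \<in> state_morphisms G (inv_rev G \<gamma>') (inv_rev G \<gamma>)" for s
    using mirror_state_morphisms[OF that \<gamma>''(1)] \<gamma>''(2) inv_rev_inv_rev[OF \<gamma>] inv_rev_inv_rev[OF \<gamma>']
    by simp
  have g: "?g s \<in> state_morphisms G \<gamma> \<gamma>'" if "s \<in> state_morphisms G (inv_rev G \<gamma>') (inv_rev G \<gamma>)" for s
    using inverse_state_morphisms[OF m[OF that] \<gamma>'] .
  show ?thesis
  proof (rule bij_betw_byWitness[where f' = ?g])
    show "\<forall>s\<in>state_morphisms G \<gamma> \<gamma>'. ?g (?f s) = s"
    proof
      fix s assume s: "s \<in> state_morphisms G \<gamma> \<gamma>'"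
      then have s': "s \<in> reachable_states G \<gamma>" "fst s = \<gamma>'"
        unfolding state_morphisms_def by auto
      have "inverse_state G \<gamma> s \<in> reachable_states G \<gamma>'"
        using inverse_state_morphisms[OF s \<gamma>] unfolding state_morphisms_def by simp
      then have "braid_state_wf G ?n (inverse_state G \<gamma> s)"
        using reachable_statesD(1)[OF _ \<gamma>'] len by simp
      then show "?g (?f s) = s"
        using inverse_state_inverse_state[OF s'(1) \<gamma>] s'(2) by (simp add: mirror_mirror_state)
    qed
    show "\<forall>s\<in>state_morphisms G (inv_rev G \<gamma>') (inv_rev G \<gamma>). ?f (?g s) = s"
    proof
      fix s assume s: "s \<in> state_morphisms G (inv_rev G \<gamma>') (inv_rev G \<gamma>)"
      then have m': "mirror_state G ?n s \<in> reachable_states G \<gamma>'" "fst (mirror_state G ?n s) = \<gamma>"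
        using m unfolding state_morphisms_def by auto
      have "inverse_state G \<gamma> (?g s) = mirror_state G ?n s"
        using inverse_state_inverse_state[OF m'(1) \<gamma>'] m'(2) by simp
      moreover have "braid_state_wf G ?n s"
        using s reachable_statesD(1)[OF _ \<gamma>''(1)] \<gamma>''(2) by (simp add: state_morphisms_def)
      ultimately show "?f (?g s) = s" by (simp add: mirror_mirror_state)
    qed
    show "?f ` state_morphisms G \<gamma> \<gamma>' \<subseteq> state_morphisms G (inv_rev G \<gamma>') (inv_rev G \<gamma>)"
      by (rule image_subsetI) (rule f)
    show "?g ` state_morphisms G (inv_rev G \<gamma>') (inv_rev G \<gamma>) \<subseteq> state_morphisms G \<gamma> \<gamma>'"
      by (rule image_subsetI) (rule g)
  qed
qed

lemma sum_snd_reachable_states: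
  assumes fin: "finite (carrier G)" and \<gamma>: "in_carrier \<gamma>"
    and vanish: "\<forall>s\<in>reachable_states G \<gamma>. fst s \<noteq> \<gamma>' \<longrightarrow> T (snd s) = 0"
  shows "(\<Sum>f\<in>snd ` reachable_states G \<gamma>. T f) = (\<Sum>s\<in>state_morphisms G \<gamma> \<gamma>'. T (snd s))"
proof -
  have "(\<Sum>f\<in>snd ` reachable_states G \<gamma>. T f) = (\<Sum>s\<in>reachable_states G \<gamma>. T (snd s))"
    using sum.reindex[OF inj_on_snd_reachable_states[OF \<gamma>]] by simp
  also have "\<dots> = (\<Sum>s\<in>state_morphisms G \<gamma> \<gamma>'. T (snd s))"
    using finite_reachable_states[OF fin \<gamma>] vanish
    by (intro sum.mono_neutral_right) (auto simp: state_morphisms_def)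
  finally show ?thesis .
qed

lemma average_reachable_states_mirror:
  fixes T T' :: "'a list \<times> nat list \<Rightarrow> 'k::field"
  assumes fin: "finite (carrier G)" and \<gamma>: "in_carrier \<gamma>" and \<gamma>': "in_carrier \<gamma>'"
    and len: "length \<gamma>' = length \<gamma>"
    and vanish: "\<forall>s\<in>reachable_states G \<gamma>. fst s \<noteq> \<gamma>' \<longrightarrow> T (snd s) = 0"
    and vanish': "\<forall>s\<in>reachable_states G (inv_rev G \<gamma>'). fst s \<noteq> inv_rev G \<gamma> \<longrightarrow> T' (snd s) = 0"
    and match: "\<forall>s\<in>state_morphisms G \<gamma> \<gamma>'.
      T' (snd (mirror_state G (length \<gamma>) (inverse_state G \<gamma> s))) = T (snd s)"
  shows "1 / of_nat (card (snd ` reachable_states G \<gamma>)) * (\<Sum>f\<in>snd ` reachable_states G \<gamma>. T f)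
    = 1 / of_nat (card (snd ` reachable_states G (inv_rev G \<gamma>'))) *
      (\<Sum>f\<in>snd ` reachable_states G (inv_rev G \<gamma>'). T' f)"
proof (cases "state_morphisms G \<gamma> \<gamma>' = {}")
  case True
  then have "state_morphisms G (inv_rev G \<gamma>') (inv_rev G \<gamma>) = {}"
    using bij_betw_mirror_inverse_state[OF \<gamma> \<gamma>' len] by (simp add: bij_betw_def)
  with True show ?thesis
    by (simp add: sum_snd_reachable_states[OF fin \<gamma> vanish]
        sum_snd_reachable_states[OF fin in_carrier_inv_rev[OF \<gamma>'] vanish'])
next
  case False
  then obtain s where s: "s \<in> reachable_states G \<gamma>" "fst s = \<gamma>'"
    unfolding state_morphisms_def by auto
  have "card (snd ` reachable_states G \<gamma>) = card (snd ` reachable_states G (inv_rev G \<gamma>'))"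
    using card_reachable_states_fst[OF fin s(1) \<gamma>] card_reachable_states_inv_rev[OF \<gamma>'] s(2)
      card_image[OF inj_on_snd_reachable_states[OF \<gamma>]]
      card_image[OF inj_on_snd_reachable_states[OF in_carrier_inv_rev[OF \<gamma>']]]
    by simp
  moreover have "(\<Sum>s\<in>state_morphisms G \<gamma> \<gamma>'. T (snd s))
      = (\<Sum>s\<in>state_morphisms G (inv_rev G \<gamma>') (inv_rev G \<gamma>). T' (snd s))"
    using sum.reindex_bij_betw[OF bij_betw_mirror_inverse_state[OF \<gamma> \<gamma>' len], of "T' \<circ> snd"] match
    by simp
  ultimately show ?thesis
    by (simp add: sum_snd_reachable_states[OF fin \<gamma> vanish]
        sum_snd_reachable_states[OF fin in_carrier_inv_rev[OF \<gamma>'] vanish'])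
qed

end

section \<open>Matrix coefficients of the braidization\<close>

definition degree_compatible ::
  "('g, 'b) monoid_scheme \<Rightarrow> ('i \<Rightarrow> 'g) \<Rightarrow> ('g \<Rightarrow> 'i \<Rightarrow> 'i \<Rightarrow> 'k::zero) \<Rightarrow> bool" where
  "degree_compatible G deg rho \<longleftrightarrow>
     (\<forall>g\<in>carrier G. \<forall>i j. rho g i j \<noteq> 0 \<longrightarrow> deg i = g \<otimes>\<^bsub>G\<^esub> deg j \<otimes>\<^bsub>G\<^esub> inv\<^bsub>G\<^esub> g)"

text \<open>The coefficient of \<open>e\<^bsub>js\<^esub>\<close> in the image of the basis tensor \<open>e\<^bsub>is\<^esub>\<close> under the
  transformation \<open>(h, p)\<close>.\<close>

definition transf_coeff ::
  "('g \<Rightarrow> 'i \<Rightarrow> 'i \<Rightarrow> 'k::field) \<Rightarrow> 'i list \<Rightarrow> 'i list \<Rightarrow> 'g list \<times> nat list \<Rightarrow> 'k" where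
  "transf_coeff rho is js f = (case f of (h, p) \<Rightarrow> \<Prod>j<length is. rho (h!j) (js!j) (is!(p!j)))"

definition braid_coeff ::
  "('g, 'b) monoid_scheme \<Rightarrow> ('i \<Rightarrow> 'g) \<Rightarrow> ('g \<Rightarrow> 'i \<Rightarrow> 'i \<Rightarrow> 'k::field) \<Rightarrow> 'i list \<Rightarrow> 'i list \<Rightarrow> 'k" where
  "braid_coeff G deg rho is js = 1 / of_nat (card (braid_transf G (map deg is))) *
     (\<Sum>f\<in>braid_transf G (map deg is). transf_coeff rho is js f)"

lemma braidization_eq_sum_braid_coeff:
  "length js = n \<Longrightarrow> braidization G deg rho n T js = (\<Sum>is\<in>tuples n. T is * braid_coeff G deg rho is js)"
  unfolding braidization_def braid_coeff_def transf_coeff_def tuples_def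
  by (auto simp: mult.assoc intro!: sum.cong)

context group
begin

lemma degree_compatible_dual:
  assumes "degree_compatible G deg rho" and deg: "\<forall>i. deg i \<in> carrier G"
  shows "degree_compatible G (dual_deg G deg) (dual_rep G rho)"
  unfolding degree_compatible_def
proof (intro ballI allI impI)
  fix g i j assume g: "g \<in> carrier G" and "dual_rep G rho g i j \<noteq> 0"
  then have "rho (inv g) j i \<noteq> 0" unfolding dual_rep_def by simp
  with assms(1) inv_closed[OF g] have "deg j = inv g \<otimes> deg i \<otimes> inv (inv g)"
    unfolding degree_compatible_def by blast
  with g have "deg j = inv g \<otimes> deg i \<otimes> g" by simp
  then have "g \<otimes> inv (deg j) \<otimes> inv g = g \<otimes> (inv g \<otimes> inv (deg i) \<otimes> g) \<otimes> inv g"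
    using g deg by (simp add: inv_mult_group m_assoc)
  also have "\<dots> = inv (deg i)" using g deg by (simp add: m_assoc)
  finally show "dual_deg G deg i = g \<otimes> dual_deg G deg j \<otimes> inv g"
    unfolding dual_deg_def by simp
qed

lemma transf_coeff_eq_0:
  assumes "degree_compatible G deg rho" and deg: "\<forall>i. deg i \<in> carrier G"
    and s: "s \<in> reachable_states G (map deg is)" and len: "length js = length is"
    and ne: "fst s \<noteq> map deg js"
  shows "transf_coeff rho is js (snd s) = 0"
proof -
  let ?n = "length is"
  obtain \<gamma>' h p where sp: "s = (\<gamma>', h, p)" by (cases s)
  have "braid_state_wf G ?n s" "transports_degrees G (map deg is) s"
    using reachable_statesD[OF s] deg by auto
  then have wf: "length \<gamma>' = ?n" "\<forall>j<?n. h!j \<in> carrier G" "\<forall>j<?n. p!j < ?n"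
    and tr: "\<forall>j<?n. \<gamma>'!j = h!j \<otimes> deg (is!(p!j)) \<otimes> inv (h!j)"
    unfolding sp braid_state_wf_def transports_degrees_def by auto
  have "\<gamma>' \<noteq> map deg js" using ne sp by simp
  with wf(1) len obtain j where j: "j < ?n" "\<gamma>'!j \<noteq> deg (js!j)"
    by (auto simp: list_eq_iff_nth_eq)
  have "rho (h!j) (js!j) (is!(p!j)) = 0"
  proof (rule ccontr)
    assume "rho (h!j) (js!j) (is!(p!j)) \<noteq> 0"
    with assms(1) wf(2) j(1) have "deg (js!j) = h!j \<otimes> deg (is!(p!j)) \<otimes> inv (h!j)"
      unfolding degree_compatible_def by blast
    with tr j show False by simp
  qed
  with j show ?thesis unfolding sp transf_coeff_def by auto
qed

lemma inverse_state_snd: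
  assumes s: "s \<in> reachable_states G \<gamma>" and \<gamma>: "in_carrier \<gamma>"
    and hp: "snd s = (h, p)" and hp': "snd (inverse_state G \<gamma> s) = (h', p')"
  shows "length h' = length \<gamma>" and "length p' = length \<gamma>"
    and "bij_betw (\<lambda>k. p'!k) {..<length \<gamma>} {..<length \<gamma>}"
    and "\<And>k. k < length \<gamma> \<Longrightarrow> p!(p'!k) = k \<and> h!(p'!k) = inv (h'!k)"
proof -
  let ?n = "length \<gamma>"
  let ?t = "inverse_state G \<gamma> s"
  have \<gamma>': "in_carrier (fst s)" "length (fst s) = ?n" using reachable_states_fst[OF s \<gamma>] by auto
  have "braid_state_wf G ?n ?t"
    using reachable_statesD[OF inverse_state(1)[OF s \<gamma>] \<gamma>'(1)] \<gamma>'(2) by simp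
  then have wf': "length h' = ?n" "length p' = ?n" "\<forall>j<?n. h'!j \<in> carrier G"
    "\<forall>j<?n. p'!j < ?n" "distinct p'"
    using hp' unfolding braid_state_wf_def by (cases ?t; auto)+
  have wf: "length h = ?n" "\<forall>j<?n. h!j \<in> carrier G"
    using reachable_statesD[OF s \<gamma>] hp unfolding braid_state_wf_def by (cases s; auto)+
  have maps: "map (\<lambda>j. h'!j \<otimes> h!(p'!j)) [0..<?n] = replicate ?n \<one>"
    "map (\<lambda>j. p!(p'!j)) [0..<?n] = [0..<?n]"
    using inverse_state(2)[OF s \<gamma>] hp hp'
    unfolding compose_state_def initial_state_def by (auto split: prod.splits)
  have comp: "h'!k \<otimes> h!(p'!k) = \<one> \<and> p!(p'!k) = k" if "k < ?n" for k
  proof -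
    have "map (\<lambda>j. h'!j \<otimes> h!(p'!j)) [0..<?n] ! k = replicate ?n \<one> ! k"
      "map (\<lambda>j. p!(p'!j)) [0..<?n] ! k = [0..<?n] ! k"
      by (simp_all only: maps)
    with that show ?thesis by simp
  qed
  show "length h' = ?n" "length p' = ?n" using wf' by simp_all
  have "inj_on (\<lambda>k. p'!k) {..<?n}"
    using wf' by (auto simp: inj_on_def nth_eq_iff_index_eq)
  moreover have "(\<lambda>k. p'!k) ` {..<?n} = {..<?n}"
    using wf' calculation by (intro endo_inj_surj) auto
  ultimately show "bij_betw (\<lambda>k. p'!k) {..<?n} {..<?n}"
    by (simp add: bij_betw_def)
  show "p!(p'!k) = k \<and> h!(p'!k) = inv (h'!k)" if k: "k < ?n" for k
  proof
    show "p!(p'!k) = k" using comp[OF k] by simp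
    have "h!(p'!k) \<otimes> h'!k = \<one>"
      by (rule inv_comm[OF conjunct1[OF comp[OF k]]]) (use wf wf' k in auto)
    then have "inv (h'!k) = h!(p'!k)"
      by (rule inv_equality) (use wf wf' k in auto)
    then show "h!(p'!k) = inv (h'!k)" by simp
  qed
qed

end


context group
begin

lemma transf_coeff_mirror_inverse_state:
  assumes s: "s \<in> reachable_states G \<gamma>" and \<gamma>: "in_carrier \<gamma>"
    and len: "length is = length \<gamma>" "length ks = length \<gamma>"
  shows "transf_coeff (dual_rep G rho) ks (rev is)
      (snd (mirror_state G (length \<gamma>) (inverse_state G \<gamma> s))) = transf_coeff rho is (rev ks) (snd s)"
proof -
  let ?n = "length \<gamma>"
  obtain h p where hp: "snd s = (h, p)" by (cases "snd s")
  obtain \<gamma>' h' p' where t: "inverse_state G \<gamma> s = (\<gamma>', h', p')" by (cases "inverse_state G \<gamma> s")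
  then have hp': "snd (inverse_state G \<gamma> s) = (h', p')" by simp
  note len' = inverse_state_snd(1,2)[OF s \<gamma> hp hp'] and perm = inverse_state_snd(3)[OF s \<gamma> hp hp']
    and comp = inverse_state_snd(4)[OF s \<gamma> hp hp']
  define F where "F m = rho (h!m) (rev ks!m) (is!(p!m))" for m
  have "transf_coeff (dual_rep G rho) ks (rev is) (snd (mirror_state G ?n (inverse_state G \<gamma> s)))
      = (\<Prod>j<?n. rho (inv (rev h'!j)) (ks!(rev (map ((-) (?n - 1)) p')!j)) (rev is!j))"
    using len unfolding t mirror_state_def transf_coeff_def dual_rep_def by simp
  also have "\<dots> = (\<Prod>k<?n. rho (inv (rev h'!(?n - Suc k)))
      (ks!(rev (map ((-) (?n - 1)) p')!(?n - Suc k))) (rev is!(?n - Suc k)))"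
    by (rule prod.reindex_bij_witness[of _ "\<lambda>k. ?n - Suc k" "\<lambda>k. ?n - Suc k"]) auto
  \<comment> \<open>Under \<open>s\<close> the input factor \<open>k\<close> lands at position \<open>p' k\<close> and is acted on by
    \<open>h (p' k) = (h' k)\<inverse>\<close>, which is how the dual action of \<open>h' k\<close> reads.\<close>
  also have "\<dots> = (\<Prod>k<?n. F (p'!k))"
  proof (rule prod.cong)
    fix k assume k: "k \<in> {..<?n}"
    with bij_betw_apply[OF perm] have "p'!k < ?n" by simp
    with k len len' comp[of k] show "rho (inv (rev h'!(?n - Suc k)))
        (ks!(rev (map ((-) (?n - 1)) p')!(?n - Suc k))) (rev is!(?n - Suc k)) = F (p'!k)"
      unfolding F_def by (auto simp: rev_nth)
  qed simp
  also have "\<dots> = (\<Prod>m<?n. F m)"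
    by (rule prod.reindex_bij_betw[OF perm])
  finally show ?thesis
    using len unfolding hp transf_coeff_def F_def by simp
qed

lemma braid_coeff_dual:
  assumes fin: "finite (carrier G)" and gm: "graded_module G deg rho" and len: "length b = length c"
  shows "braid_coeff G (dual_deg G deg) (dual_rep G rho) c (rev b) = braid_coeff G deg rho b (rev c)"
proof -
  have deg: "\<forall>i. deg i \<in> carrier G" and compat: "degree_compatible G deg rho"
    using gm unfolding graded_module_def degree_compatible_def by auto
  have deg': "\<forall>i. dual_deg G deg i \<in> carrier G" using deg unfolding dual_deg_def by simp
  note compat' = degree_compatible_dual[OF compat deg]
  let ?\<gamma> = "map deg b" and ?\<gamma>' = "map deg (rev c)"
  have inv_rev: "inv_rev G ?\<gamma>' = map (dual_deg G deg) c" "inv_rev G ?\<gamma> = map (dual_deg G deg) (rev b)"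
    by (simp_all add: rev_map dual_deg_def)
  have "1 / of_nat (card (snd ` reachable_states G ?\<gamma>)) *
        (\<Sum>f\<in>snd ` reachable_states G ?\<gamma>. transf_coeff rho b (rev c) f)
      = 1 / of_nat (card (snd ` reachable_states G (inv_rev G ?\<gamma>'))) *
        (\<Sum>f\<in>snd ` reachable_states G (inv_rev G ?\<gamma>'). transf_coeff (dual_rep G rho) c (rev b) f)"
  proof (rule average_reachable_states_mirror[OF fin])
    show "in_carrier ?\<gamma>" "in_carrier ?\<gamma>'" "length ?\<gamma>' = length ?\<gamma>" using deg len by auto
    show "\<forall>s\<in>reachable_states G ?\<gamma>. fst s \<noteq> ?\<gamma>' \<longrightarrow> transf_coeff rho b (rev c) (snd s) = 0"
      using transf_coeff_eq_0[OF compat deg] len by auto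
    show "\<forall>s\<in>reachable_states G (inv_rev G ?\<gamma>'). fst s \<noteq> inv_rev G ?\<gamma> \<longrightarrow>
        transf_coeff (dual_rep G rho) c (rev b) (snd s) = 0"
      unfolding inv_rev using transf_coeff_eq_0[OF compat' deg'] len by auto
    show "\<forall>s\<in>state_morphisms G ?\<gamma> ?\<gamma>'. transf_coeff (dual_rep G rho) c (rev b)
        (snd (mirror_state G (length ?\<gamma>) (inverse_state G ?\<gamma> s))) = transf_coeff rho b (rev c) (snd s)"
    proof
      fix s assume "s \<in> state_morphisms G ?\<gamma> ?\<gamma>'"
      then have "s \<in> reachable_states G ?\<gamma>" by (simp add: state_morphisms_def)
      then show "transf_coeff (dual_rep G rho) c (rev b) (snd (mirror_state G (length ?\<gamma>)
          (inverse_state G ?\<gamma> s))) = transf_coeff rho b (rev c) (snd s)"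
        by (rule transf_coeff_mirror_inverse_state) (use deg len in auto)
    qed
  qed
  then show ?thesis
    unfolding braid_coeff_def braid_transf_eq_reachable_states inv_rev by simp
qed

end

lemma finite_tuples: "finite (tuples n :: 'i::finite list set)"
  unfolding tuples_def using finite_lists_length_eq[OF finite_UNIV, of n] by (simp only: subset_UNIV simp_thms)

lemma prod_reversal_indicator:
  assumes "length js = n" "length is = n"
  shows "(\<Prod>k<n. if js!(n - 1 - k) = is!k then 1 else 0) = (if js = rev is then 1 else (0::'k::field))"
proof (cases "js = rev is")
  case True
  with assms show ?thesis by (simp add: rev_nth)
next
  case False
  have "\<exists>k<n. js!(n - 1 - k) \<noteq> is!k"
  proof (rule ccontr)
    assume "\<not> (\<exists>k<n. js!(n - 1 - k) \<noteq> is!k)"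
    then have all: "js!(n - 1 - k) = is!k" if "k < n" for k
      using that by blast
    have "js = rev is"
    proof (rule nth_equalityI)
      show "length js = length (rev is)" using assms by simp
      fix j assume "j < length js"
      with all[of "n - Suc j"] assms show "js!j = rev is!j" by (simp add: rev_nth)
    qed
    with False show False ..
  qed
  with False show ?thesis by (auto intro: prod_zero)
qed

lemma pairing_eq_sum:
  "pairing n X T = (\<Sum>js\<in>tuples n. X js * T (rev js :: 'i::finite list))"
proof -
  have "pairing n X T = (\<Sum>js\<in>tuples n. \<Sum>is\<in>tuples n. X js * T is * (if js = rev is then 1 else 0))"
    unfolding pairing_def
  proof (intro sum.cong refl)
    fix js "is" :: "'i list" assume "js \<in> tuples n" "is \<in> tuples n"
    then have "length js = n" "length is = n" by (simp_all add: tuples_def)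
    then show "X js * T is * (\<Prod>k<n. if js!(n - 1 - k) = is!k then 1 else 0)
        = X js * T is * (if js = rev is then 1 else 0)"
      by (simp only: prod_reversal_indicator)
  qed
  also have "\<dots> = (\<Sum>js\<in>tuples n. X js * T (rev js))"
  proof (intro sum.cong refl)
    fix js :: "'i list" assume "js \<in> tuples n"
    then have "rev js \<in> tuples n" by (simp add: tuples_def)
    have "(\<Sum>is\<in>tuples n. X js * T is * (if js = rev is then 1 else 0))
        = (\<Sum>is\<in>tuples n. if is = rev js then X js * T is else 0)"
      by (intro sum.cong refl) auto
    also have "\<dots> = X js * T (rev js)"
      using \<open>rev js \<in> tuples n\<close> by (simp add: finite_tuples)
    finally show "(\<Sum>is\<in>tuples n. X js * T is * (if js = rev is then 1 else 0)) = X js * T (rev js)" .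
  qed
  finally show ?thesis .
qed

theorem corollary2p39:
  fixes G :: "('g, 'b) monoid_scheme"
    and deg :: "'i::finite \<Rightarrow> 'g"
    and rho :: "'g \<Rightarrow> 'i \<Rightarrow> 'i \<Rightarrow> 'k::field"
    and n :: nat
    and x :: "'i list \<Rightarrow> 'k"
    and v :: "'i list \<Rightarrow> 'k"
  assumes "group G"
    and "finite (carrier G)"
    and "graded_module G deg rho"
    and "\<forall>js. length js \<noteq> n \<longrightarrow> x js = 0"
    and "\<forall>is. length is \<noteq> n \<longrightarrow> v is = 0"
  shows "pairing n (braidization G (dual_deg G deg) (dual_rep G rho) n x) v
           = pairing n x (braidization G deg rho n v)"
proof -
  let ?B = "braid_coeff G deg rho" and ?B' = "braid_coeff G (dual_deg G deg) (dual_rep G rho)"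
  have dual: "?B' c js = ?B (rev js) (rev c)" if "js \<in> tuples n" "c \<in> tuples n" for js c
    using group.braid_coeff_dual[OF assms(1-3), of "rev js" c] that by (simp add: tuples_def)
  have "pairing n (braidization G (dual_deg G deg) (dual_rep G rho) n x) v
      = (\<Sum>js\<in>tuples n. \<Sum>c\<in>tuples n. x c * ?B (rev js) (rev c) * v (rev js))"
    unfolding pairing_eq_sum
    by (intro sum.cong refl) (auto simp: braidization_eq_sum_braid_coeff tuples_def dual sum_distrib_right)
  also have "\<dots> = (\<Sum>c\<in>tuples n. \<Sum>js\<in>tuples n. x c * ?B (rev js) (rev c) * v (rev js))"
    by (rule sum.swap)
  also have "\<dots> = (\<Sum>c\<in>tuples n. x c * (\<Sum>b\<in>tuples n. v b * ?B b (rev c)))"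
    unfolding sum_distrib_left
    by (intro sum.cong refl sum.reindex_bij_witness[of _ rev rev]) (auto simp: tuples_def)
  also have "\<dots> = pairing n x (braidization G deg rho n v)"
    unfolding pairing_eq_sum by (intro sum.cong refl) (simp add: braidization_eq_sum_braid_coeff tuples_def)
  finally show ?thesis .
qed

end
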